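(* Let $d\ge1$, $\sigma^2>0$, $\nu>0$, $\phi>0$, $\boldsymbol\lambda\in\mathbb{R}^d$ and $\boldsymbol\Lambda$ a $d\times d$ symmetric positive-definite matrix. For $\rho>0$ let $C_s(\mathbf{x};\rho)=\sigma^2\exp\{-\|\mathbf{x}\|^2/\rho^2\}$, $\mathbf{x}\in\mathbb{R}^d$, and define $C(\mathbf{h},u;\rho):=E_{\mathbf{v}}[C_s(\mathbf{h}-\mathbf{v}u;\rho)]$ where $\mathbf{v}\sim\mathcal{N}_d(\boldsymbol\lambda,\rho^2\boldsymbol\Lambda/2)$. Define $K(\mathbf{h},u):=\int_0^\infty C(\mathbf{h},u;\rho)\,p(\rho^2)\,\mathrm{d}\rho^2$ where $\rho^2\sim\mathrm{Ga}(\nu,1/(4\phi^2))$ with density $p$. Then for all $(\mathbf{h},u)\in\mathbb{R}^d\times\mathbb{R}$, $$K(\mathbf{h},u)=\sigma^2\,|\mathbf{I}_{d}+u^2\boldsymbol\Lambda|^{-1/2}\,\mathcal{M}(h_u;\nu,\phi),$$ where $h_u:=\{(\mathbf{h}-u\boldsymbol\lambda)^\top(u^2\boldsymbol\Lambda+\mathbf{I}_d)^{-1}(\mathbf{h}-u\boldsymbol\lambda)\}^{1/2}$.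
   Context: $X\sim\mathrm{Ga}(a,b)$ means $X$ has density $\frac{b^a}{\Gamma(a)}x^{a-1}e^{-bx}$, $x>0$ (shape $a$, rate $b$). The Matérn correlation is $\mathcal{M}(r;\nu,\phi)=\frac{2^{1-\nu}}{\Gamma(\nu)}(r/\phi)^\nu\mathcal{K}_\nu(r/\phi)$ for $r>0$ and $\mathcal{M}(0;\nu,\phi)=1$, where $\mathcal{K}_\nu$ is the modified Bessel function of the second kind of order $\nu$. $|\cdot|$ of a matrix denotes its determinant and $\mathbf{I}_d$ the $d\times d$ identity. *)

theory Defs
  imports "HOL-Analysis.Analysis"
begin

definition besselK :: "real \<Rightarrow> real \<Rightarrow> real" where
  "besselK \<nu> x = (LBINT t:{0..}. exp (- x * cosh t) * cosh (\<nu> * t))"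

definition matern :: "real \<Rightarrow> real \<Rightarrow> real \<Rightarrow> real" where
  "matern r \<nu> \<phi> =
     (if r = 0 then 1
      else 2 powr (1 - \<nu>) / Gamma \<nu> * (r / \<phi>) powr \<nu> * besselK \<nu> (r / \<phi>))"

definition gamma_density :: "real \<Rightarrow> real \<Rightarrow> real \<Rightarrow> real" where
  "gamma_density a b x = b powr a / Gamma a * x powr (a - 1) * exp (- b * x)"

definition mvn_density :: "real^'d \<Rightarrow> real^'d^'d \<Rightarrow> real^'d \<Rightarrow> real" where
  "mvn_density \<mu> \<Sigma> v =
     exp (- ((v - \<mu>) \<bullet> (matrix_inv \<Sigma> *v (v - \<mu>))) / 2)
     / sqrt ((2 * pi) ^ CARD('d) * det \<Sigma>)"

definition mvn_expect :: "real^'d \<Rightarrow> real^'d^'d \<Rightarrow> (real^'d \<Rightarrow> real) \<Rightarrow> real" where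
  "mvn_expect \<mu> \<Sigma> f = (\<integral>v. f v * mvn_density \<mu> \<Sigma> v \<partial>lborel)"

definition pos_def_sym :: "real^'d^'d \<Rightarrow> bool" where
  "pos_def_sym A \<longleftrightarrow> transpose A = A \<and> (\<forall>x. x \<noteq> 0 \<longrightarrow> x \<bullet> (A *v x) > 0)"

end

theory Submission
  imports Defs "HOL-Probability.Distributions"
begin

(* Given rho^2 = s, the covariance of v is (s/2) Lambda, and averaging the squared exponential
   exp (- |h - u v|^2 / s) against this Gaussian is the integral of the exponential of a quadratic
   form: completing the square yields det (I + u^2 Lambda)^(-1/2) exp (- h_u^2 / s).  Mixing
   exp (- h_u^2 / s) over s ~ Ga(nu, 1/(4 phi^2)) and substituting s = 2 phi h_u e^t turns the
   exponent into - (h_u/phi) cosh t, which is the integral representation of K_nu, hence the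
   Matern correlation.  The d-dimensional Gaussian integral is reduced to the standard one via a
   matrix F with F^T P F = I (an orthonormal basis for the inner product of P) and the linear
   change of variables formula. *)

section \<open>Symmetric positive definite matrices\<close>

lemma
  fixes A :: "real^'n::finite^'n"
  assumes "invertible A"
  shows matrix_inv_right: "A ** matrix_inv A = mat 1"
    and matrix_inv_left: "matrix_inv A ** A = mat 1"
proof -
  have "A ** matrix_inv A = mat 1 \<and> matrix_inv A ** A = mat 1"
    using assms unfolding invertible_def matrix_inv_def by (rule someI_ex)
  then show "A ** matrix_inv A = mat 1" "matrix_inv A ** A = mat 1"
    by auto
qed

lemma matrix_inv_eqI:
  fixes A B :: "real^'n::finite^'n"
  assumes "A ** B = mat 1"
  shows "matrix_inv A = B"
proof -
  have "B ** A = mat 1"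
    using assms matrix_left_right_inverse by blast
  then have "invertible A"
    using assms unfolding invertible_def by blast
  then have "matrix_inv A = matrix_inv A ** (A ** B)"
    using assms by simp
  also have "\<dots> = B"
    using matrix_inv_left[OF \<open>invertible A\<close>] by (simp add: matrix_mul_assoc)
  finally show ?thesis .
qed

lemma transpose_add: "transpose (A + B) = transpose A + transpose (B :: 'a::semiring_1^'n^'m)"
  by (simp add: transpose_def vec_eq_iff)

lemma det_scaleR: "det (c *\<^sub>R A) = c ^ CARD('n) * det (A :: real^'n::finite^'n)"
proof -
  have "det (c *\<^sub>R mat 1 :: real^'n^'n) = c ^ CARD('n)"
    by (subst det_diagonal) (simp_all add: mat_def)
  moreover have "c *\<^sub>R A = (c *\<^sub>R mat 1) ** A"
    by (simp add: scalar_matrix_assoc[symmetric])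
  ultimately show ?thesis
    by (simp add: det_mul)
qed

lemma inner_matrix_symmetric:
  fixes A :: "real^'n::finite^'n"
  assumes "transpose A = A"
  shows "x \<bullet> (A *v y) = y \<bullet> (A *v x)"
  by (metis assms dot_lmul_matrix inner_commute transpose_matrix_vector)

lemma pos_def_sym_invertible:
  assumes "pos_def_sym A"
  shows "invertible A"
proof -
  have "\<forall>x. A *v x = 0 \<longrightarrow> x = 0"
    using assms unfolding pos_def_sym_def by (metis inner_zero_right less_irrefl)
  then show ?thesis
    using matrix_left_invertible_ker invertible_left_inverse by blast
qed

lemma pos_def_sym_matrix_inv:
  fixes A :: "real^'n::finite^'n"
  assumes "pos_def_sym A"
  shows "pos_def_sym (matrix_inv A)"
  unfolding pos_def_sym_def
proof (intro conjI allI impI)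
  have inv: "invertible A"
    using assms by (rule pos_def_sym_invertible)
  have "A ** transpose (matrix_inv A) = mat 1"
    using matrix_inv_left[OF inv] assms unfolding pos_def_sym_def
    by (metis matrix_transpose_mul transpose_mat)
  then show "transpose (matrix_inv A) = matrix_inv A"
    by (metis matrix_inv_eqI)
  fix x :: "real^'n"
  assume "x \<noteq> 0"
  define y where "y = matrix_inv A *v x"
  have "A *v y = x"
    by (simp add: y_def matrix_vector_mul_assoc matrix_inv_right[OF inv])
  then have "y \<noteq> 0" "x \<bullet> (matrix_inv A *v x) = y \<bullet> (A *v y)"
    using \<open>x \<noteq> 0\<close> by (auto simp: y_def inner_commute)
  then show "0 < x \<bullet> (matrix_inv A *v x)"
    using assms unfolding pos_def_sym_def by simp
qed

lemma pos_def_sym_scaleR: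
  assumes "pos_def_sym A" "c > 0"
  shows "pos_def_sym (c *\<^sub>R A)"
  using assms by (simp add: pos_def_sym_def transpose_scalar scaleR_matrix_vector_assoc[symmetric])

lemma pos_def_sym_add_nonneg:
  assumes "pos_def_sym A" "transpose B = B" "\<And>x. 0 \<le> x \<bullet> (B *v x)"
  shows "pos_def_sym (A + B)"
  using assms unfolding pos_def_sym_def
  by (auto simp: transpose_add matrix_vector_mult_add_rdistrib inner_add_right intro!: add_pos_nonneg)

lemma pos_def_sym_mat_1: "pos_def_sym (mat 1)"
  by (simp add: pos_def_sym_def)

lemma pos_def_sym_imp_nonneg:
  assumes "pos_def_sym A"
  shows "0 \<le> x \<bullet> (A *v x)"
  using assms unfolding pos_def_sym_def by (cases "x = 0") (auto intro: less_imp_le)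

lemma pos_def_sym_mat_1_add:
  assumes "pos_def_sym A" "t \<ge> 0"
  shows "pos_def_sym (mat 1 + t *\<^sub>R A)"
  using assms
  by (intro pos_def_sym_add_nonneg pos_def_sym_mat_1)
    (auto simp: pos_def_sym_def transpose_scalar scaleR_matrix_vector_assoc[symmetric]
      intro!: mult_nonneg_nonneg pos_def_sym_imp_nonneg)

definition orthonormal_wrt :: "real^'n^'n \<Rightarrow> (real^'n) set \<Rightarrow> bool" where
  "orthonormal_wrt P W \<longleftrightarrow> (\<forall>v\<in>W. \<forall>w\<in>W. v \<bullet> (P *v w) = (if v = w then 1 else 0))"

lemma orthonormal_wrt_independent:
  assumes "orthonormal_wrt P W"
  shows "independent W"
proof
  assume "dependent W"
  then obtain T u v where T: "finite T" "T \<subseteq> W" "(\<Sum>w\<in>T. u w *\<^sub>R w) = 0" "v \<in> T" "u v \<noteq> 0"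
    unfolding dependent_explicit by blast
  have "0 = (\<Sum>w\<in>T. u w *\<^sub>R w) \<bullet> (P *v v)"
    using T by simp
  also have "\<dots> = (\<Sum>w\<in>T. u w * (if w = v then 1 else 0))"
    using T assms unfolding orthonormal_wrt_def inner_sum_left
    by (intro sum.cong) (auto simp: subset_iff)
  also have "\<dots> = u v"
    using T by (simp add: if_distrib cong: if_cong)
  finally show False
    using T by simp
qed

text \<open>A Gram-Schmidt step for the inner product \<open>(v, w) \<mapsto> v \<bullet> (P *v w)\<close>.\<close>

lemma orthonormal_wrt_extend:
  assumes P: "pos_def_sym P" and W: "finite W" "orthonormal_wrt P W" and x: "x \<notin> span W"
  obtains z where "z \<notin> W" "orthonormal_wrt P (insert z W)"
proof -
  have sym: "v \<bullet> (P *v w) = w \<bullet> (P *v v)" for v w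
    using P unfolding pos_def_sym_def by (intro inner_matrix_symmetric) auto
  define y where "y = x - (\<Sum>w\<in>W. (x \<bullet> (P *v w)) *\<^sub>R w)"
  have "(\<Sum>w\<in>W. (x \<bullet> (P *v w)) *\<^sub>R w) \<in> span W"
    by (intro span_sum span_scale span_base)
  then have "y \<noteq> 0"
    using x by (auto simp: y_def)
  then have q: "y \<bullet> (P *v y) > 0"
    using P unfolding pos_def_sym_def by blast
  have y_orth: "y \<bullet> (P *v v) = 0" if "v \<in> W" for v
  proof -
    have "(\<Sum>w\<in>W. (x \<bullet> (P *v w)) * (w \<bullet> (P *v v))) = (\<Sum>w\<in>W. if w = v then x \<bullet> (P *v w) else 0)"
      using W that unfolding orthonormal_wrt_def by (intro sum.cong) auto
    also have "\<dots> = x \<bullet> (P *v v)"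
      using W that by simp
    finally have "(\<Sum>w\<in>W. (x \<bullet> (P *v w)) * (w \<bullet> (P *v v))) = x \<bullet> (P *v v)" .
    then show ?thesis
      by (simp add: y_def inner_diff_left inner_sum_left)
  qed
  define z where "z = (1 / sqrt (y \<bullet> (P *v y))) *\<^sub>R y"
  have zz: "z \<bullet> (P *v z) = 1"
    using q by (simp add: z_def matrix_vector_mult_scaleR real_sqrt_mult[symmetric])
  have zw: "z \<bullet> (P *v w) = 0" "w \<bullet> (P *v z) = 0" if "w \<in> W" for w
    using y_orth[OF that] sym by (auto simp: z_def matrix_vector_mult_scaleR)
  have "z \<notin> W"
    using zz zw by force
  moreover have "orthonormal_wrt P (insert z W)"
    using W zz zw \<open>z \<notin> W\<close> unfolding orthonormal_wrt_def by auto
  ultimately show ?thesis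
    using that by blast
qed

lemma orthonormal_wrt_basis_exists:
  assumes "pos_def_sym (P :: real^'n::finite^'n)"
  obtains W where "orthonormal_wrt P W" "card W = CARD('n)"
proof -
  have "\<exists>W. orthonormal_wrt P W \<and> card W = k" if "k \<le> CARD('n)" for k
    using that
  proof (induction k)
    case 0
    show ?case
      by (intro exI[of _ "{}"]) (simp add: orthonormal_wrt_def)
  next
    case (Suc k)
    then obtain W where W: "orthonormal_wrt P W" "card W = k"
      by auto
    have "independent W"
      using W(1) by (rule orthonormal_wrt_independent)
    then have "finite W" "dim (span W) = k"
      using W(2) by (auto dest: independent_bound indep_card_eq_dim_span)
    moreover have "dim (UNIV :: (real^'n) set) = CARD('n)"
      by simp
    ultimately have "span W \<noteq> UNIV"
      using Suc.prems by (metis Suc_n_not_le_n)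
    then obtain x where "x \<notin> span W"
      by blast
    then obtain z where "z \<notin> W" "orthonormal_wrt P (insert z W)"
      using orthonormal_wrt_extend[OF assms \<open>finite W\<close> W(1)] by blast
    then show ?case
      using \<open>finite W\<close> W(2) by (intro exI[of _ "insert z W"]) simp
  qed
  then show ?thesis
    using that by blast
qed

lemma pos_def_sym_congruent_mat_1:
  assumes "pos_def_sym (P :: real^'n::finite^'n)"
  obtains F :: "real^'n^'n" where "transpose F ** P ** F = mat 1"
proof -
  obtain W where W: "orthonormal_wrt P W" "card W = CARD('n)"
    using orthonormal_wrt_basis_exists[OF assms] by blast
  then have "finite W"
    by (metis card_ge_0_finite zero_less_card_finite)
  then obtain b where b: "bij_betw b (UNIV :: 'n set) W"
    using W(2) finite_same_card_bij[of "UNIV :: 'n set" W] by auto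
  define F :: "real^'n^'n" where "F = (\<chi> r c. b c $ r)"
  have "(transpose F ** P ** F) $ i $ j = b i \<bullet> (P *v b j)" for i j
    by (simp add: F_def matrix_matrix_mult_def transpose_def matrix_vector_mult_def inner_vec_def
        sum_distrib_left sum_distrib_right mult.assoc mult.left_commute) (rule sum.swap)
  moreover have "b i \<bullet> (P *v b j) = (if i = j then 1 else 0)" for i j
    using W(1) b unfolding orthonormal_wrt_def bij_betw_def inj_on_def by auto
  ultimately have "transpose F ** P ** F = mat 1"
    by (simp add: vec_eq_iff mat_def)
  then show ?thesis
    using that by blast
qed

lemma pos_def_sym_det_pos:
  assumes "pos_def_sym (P :: real^'n::finite^'n)"
  shows "det P > 0"
proof -
  obtain F :: "real^'n^'n" where "transpose F ** P ** F = mat 1"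
    using pos_def_sym_congruent_mat_1[OF assms] by blast
  then have "det F ^ 2 * det P = 1"
    by (metis det_I det_mul det_transpose mult.commute power2_eq_square mult.assoc)
  moreover from this have "det F ^ 2 > 0"
    by auto
  ultimately show ?thesis
    by (metis zero_less_mult_pos zero_less_one)
qed

section \<open>Linear change of variables\<close>

lemma det_matrix_shear:
  fixes m n :: "'n::finite"
  assumes "m \<noteq> n"
  shows "det (matrix (\<lambda>x::real^'n. \<chi> i. if i = m then x $ m + x $ n else x $ i)) = 1"
proof -
  have "matrix (\<lambda>x::real^'n. \<chi> i. if i = m then x $ m + x $ n else x $ i)
      = (\<chi> k. if k = m then row m (mat 1) + 1 *s row n (mat 1) else row k (mat 1 :: real^'n^'n))"
    by (auto simp: matrix_def vec_eq_iff row_def mat_def axis_def)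
  then show ?thesis
    using det_row_operation[OF assms, of "mat 1 :: real^'n^'n" 1] by simp
qed

lemma measure_shear_image:
  fixes m n :: "'n::finite" and S :: "(real^'n) set"
  assumes "m \<noteq> n" and S: "S \<in> lmeasurable"
  defines "h \<equiv> \<lambda>x::real^'n. \<chi> i. if i = m then x $ m + x $ n else x $ i"
  shows "h ` S \<in> lmeasurable \<and> measure lebesgue (h ` S) = measure lebesgue S"
proof -
  have lin: "linear h"
    unfolding h_def by (rule linearI) (auto simp: vec_eq_iff algebra_simps)
  have "measure lebesgue (h ` cbox a b) = measure lebesgue (cbox a b)" for a b
  proof (cases "cbox a b = {}")
    case False
    define t where "t = axis n (a $ n)"
    have box: "cbox a b = (+) t ` cbox (a - t) (b - t)"
      using cbox_translation[of t "a - t" "b - t"] by simp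
    have "h ` cbox a b = (+) (h t) ` h ` cbox (a - t) (b - t)"
      unfolding box image_comp o_def using linear_add[OF lin] by simp
    then have "measure lebesgue (h ` cbox a b) = measure lebesgue (h ` cbox (a - t) (b - t))"
      by (simp add: measure_translation)
    also have "\<dots> = measure lebesgue (cbox (a - t) (b - t))"
      unfolding h_def using False \<open>m \<noteq> n\<close> box
      by (intro measure_shear_interval) (auto simp: t_def)
    also have "\<dots> = measure lebesgue (cbox a b)"
      by (simp add: box measure_translation)
    finally show ?thesis .
  qed simp
  then show ?thesis
    using measure_linear_sufficient[OF lin S, of 1] by simp
qed

lemma measure_permute_coordinates_image:
  fixes p :: "'n::finite \<Rightarrow> 'n" and S :: "(real^'n) set"
  assumes p: "p permutes UNIV" and S: "S \<in> lmeasurable"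
  defines "h \<equiv> \<lambda>x::real^'n. \<chi> i. x $ p i"
  shows "h ` S \<in> lmeasurable \<and> measure lebesgue (h ` S) = measure lebesgue S"
proof -
  have lin: "linear h"
    unfolding h_def by (rule linearI) (auto simp: vec_eq_iff)
  have "measure lebesgue (h ` cbox a b) = measure lebesgue (cbox a b)" for a b
  proof (cases "cbox a b = {}")
    case False
    have inv: "p (inv p i) = i" "inv p (p i) = i" for i
      using p by (auto simp: permutes_inverses)
    have "h ` cbox a b = cbox (h a) (h b)"
    proof (intro equalityI subsetI)
      fix y assume "y \<in> cbox (h a) (h b)"
      then have "(\<chi> i. y $ inv p i) \<in> cbox a b" "y = h (\<chi> i. y $ inv p i)"
        by (auto simp: h_def mem_box_cart vec_eq_iff inv) (metis inv(1))+
      then show "y \<in> h ` cbox a b"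
        by blast
    qed (auto simp: h_def mem_box_cart)
    moreover have "cbox (h a) (h b) \<noteq> {}"
      using False by (simp add: h_def interval_ne_empty_cart)
    moreover have "(\<Prod>i\<in>UNIV. b $ p i - a $ p i) = (\<Prod>i\<in>UNIV. b $ i - a $ i)"
      using prod.permute[OF p, of "\<lambda>i. b $ i - a $ i"] by (simp add: o_def)
    ultimately show ?thesis
      using False by (simp add: content_cbox_cart h_def)
  qed simp
  then show ?thesis
    using measure_linear_sufficient[OF lin S, of 1] by simp
qed

lemma abs_det_matrix_permute_coordinates:
  fixes p :: "'n::finite \<Rightarrow> 'n"
  assumes "p permutes UNIV"
  shows "\<bar>det (matrix (\<lambda>x::real^'n. \<chi> i. x $ p i))\<bar> = 1"
proof -
  have "matrix (\<lambda>x::real^'n. \<chi> i. x $ p i) = transpose (\<chi> i j. mat 1 $ i $ p j)"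
    by (auto simp: vec_eq_iff transpose_def axis_def mat_def matrix_def)
  then show ?thesis
    using assms by (simp add: det_permute_columns abs_mult sign_def)
qed

text \<open>The library proves this only for well-ordered index types, which it needs solely for the
  determinant of a shear; computing that determinant by a row operation removes the restriction.\<close>

lemma measure_linear_image_cart:
  fixes f :: "real^'n::finite \<Rightarrow> real^'n"
  assumes "linear f" "S \<in> lmeasurable"
  shows "f ` S \<in> lmeasurable \<and> measure lebesgue (f ` S) = \<bar>det (matrix f)\<bar> * measure lebesgue S"
proof -
  let ?P = "\<lambda>f :: real^'n \<Rightarrow> real^'n. \<forall>S \<in> lmeasurable.
    f ` S \<in> lmeasurable \<and> measure lebesgue (f ` S) = \<bar>det (matrix f)\<bar> * measure lebesgue S"
  have "?P f"
  proof (rule induct_linear_elementary[OF \<open>linear f\<close>])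
    fix f g :: "real^'n \<Rightarrow> real^'n"
    assume "linear f" "linear g" "?P f" "?P g"
    then show "?P (f \<circ> g)"
      unfolding image_comp[symmetric] matrix_compose[OF \<open>linear g\<close> \<open>linear f\<close>]
      by (simp add: det_mul abs_mult)
  next
    fix f :: "real^'n \<Rightarrow> real^'n" and i
    assume lin: "linear f" and "\<And>x. f x $ i = 0"
    then have "axis i 1 \<notin> range f"
      by (metis axis_nth imageE one_neq_zero)
    then have "\<not> inj f"
      using linear_injective_imp_surjective[OF lin] by auto
    then have "det (matrix f) = 0" and "negligible (f ` S)" for S
      using det_nz_iff_inj[OF lin] lin negligible_linear_singular_image by blast+
    then show "?P f"
      by (simp add: negligible_imp_measure0 negligible_imp_measurable)
  next
    fix c :: "'n \<Rightarrow> real"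
    have "det (matrix (\<lambda>x::real^'n. \<chi> i. c i * x $ i)) = prod c UNIV"
      by (subst det_diagonal) (auto simp: matrix_def axis_def)
    then show "?P (\<lambda>x. \<chi> i. c i * x $ i)"
      by (simp add: measurable_stretch measure_stretch)
  next
    fix m n :: 'n
    have p: "Transposition.transpose m n permutes UNIV"
      by (rule permutes_swap_id) auto
    show "?P (\<lambda>x. \<chi> i. x $ Transposition.transpose m n i)"
      using measure_permute_coordinates_image[OF p] abs_det_matrix_permute_coordinates[OF p] by simp
  next
    fix m n :: 'n
    assume "m \<noteq> n"
    then show "?P (\<lambda>x. \<chi> i. if i = m then x $ m + x $ n else x $ i)"
      using measure_shear_image[OF \<open>m \<noteq> n\<close>] det_matrix_shear[OF \<open>m \<noteq> n\<close>] by simp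
  qed
  then show ?thesis
    using assms(2) by blast
qed

lemma lborel_eq_density_distr_linear:
  fixes g :: "real^'n::finite \<Rightarrow> real^'n"
  assumes lin: "linear g" and det: "det (matrix g) \<noteq> 0"
  shows "lborel = density (distr lborel borel g) (\<lambda>_. ennreal \<bar>det (matrix g)\<bar>)"
proof -
  obtain h where hlin: "linear h" and hg: "\<And>x. h (g x) = x" and gh: "\<And>x. g (h x) = x"
    using linear_injective_isomorphism[OF lin] det det_nz_iff_inj[OF lin] by metis
  have [measurable]: "g \<in> borel_measurable borel"
    using lin by (intro borel_measurable_continuous_onI linear_continuous_on) (simp add: linear_conv_bounded_linear)
  have "det (matrix g) * det (matrix h) = 1"
    using matrix_compose[OF hlin lin] gh
    by (metis det_I det_mul matrix_id_mat_1 comp_apply eq_id_iff)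
  then have det_inv: "\<bar>det (matrix g)\<bar> * \<bar>det (matrix h)\<bar> = 1"
    by (metis abs_mult abs_one)
  show ?thesis
  proof (rule lborel_eqI)
    fix l u :: "real^'n"
    assume le: "\<And>b. b \<in> Basis \<Longrightarrow> l \<bullet> b \<le> u \<bullet> b"
    have "g -` box l u = h ` box l u"
      using hg gh by (auto simp: image_iff) metis
    moreover have "g -` box l u \<in> sets borel"
      using measurable_sets[of g borel borel "box l u"] by simp
    ultimately have "emeasure lborel (g -` box l u) = emeasure lebesgue (h ` box l u)"
      by simp
    also have "\<dots> = ennreal (\<bar>det (matrix h)\<bar> * measure lebesgue (box l u))"
      using measure_linear_image_cart[OF hlin, of "box l u"] by (simp add: emeasure_eq_measure2)
    finally have "emeasure lborel (g -` box l u) = ennreal (\<bar>det (matrix h)\<bar> * (\<Prod>b\<in>Basis. (u - l) \<bullet> b))"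
      using le by simp
    then show "emeasure (density (distr lborel borel g) (\<lambda>_. ennreal \<bar>det (matrix g)\<bar>)) (box l u)
        = (\<Prod>b\<in>Basis. (u - l) \<bullet> b)"
      using det_inv le
      by (simp add: emeasure_density_const emeasure_distr ennreal_mult'[symmetric] mult.assoc[symmetric]
          prod_nonneg inner_diff_left)
  qed simp
qed

lemma nn_integral_linear_substitution:
  fixes g :: "real^'n::finite \<Rightarrow> real^'n" and f :: "real^'n \<Rightarrow> ennreal"
  assumes lin: "linear g" and det: "det (matrix g) \<noteq> 0" and [measurable]: "f \<in> borel_measurable borel"
  shows "(\<integral>\<^sup>+x. f x \<partial>lborel) = ennreal \<bar>det (matrix g)\<bar> * (\<integral>\<^sup>+y. f (g y) \<partial>lborel)"
proof -
  have [measurable]: "g \<in> borel_measurable borel"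
    using lin by (intro borel_measurable_continuous_onI linear_continuous_on) (simp add: linear_conv_bounded_linear)
  have "(\<integral>\<^sup>+x. f x \<partial>lborel) = (\<integral>\<^sup>+x. f x \<partial>density (distr lborel borel g) (\<lambda>_. ennreal \<bar>det (matrix g)\<bar>))"
    using lborel_eq_density_distr_linear[OF lin det] by simp
  also have "\<dots> = (\<integral>\<^sup>+y. ennreal \<bar>det (matrix g)\<bar> * f (g y) \<partial>lborel)"
    by (simp add: nn_integral_density nn_integral_distr)
  also have "\<dots> = ennreal \<bar>det (matrix g)\<bar> * (\<integral>\<^sup>+y. f (g y) \<partial>lborel)"
    by (simp add: nn_integral_cmult)
  finally show ?thesis .
qed

section \<open>Gaussian integrals\<close>

lemma nn_integral_exp_neg_square: "(\<integral>\<^sup>+t. ennreal (exp (- t\<^sup>2)) \<partial>lborel) = ennreal (sqrt pi)"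
proof -
  have "has_bochner_integral lborel (\<lambda>t::real. exp (- t\<^sup>2)) (2 *\<^sub>R (sqrt pi / 2))"
    using has_bochner_integral_even_function[OF gaussian_moment_0] by simp
  then show ?thesis
    by (subst nn_integral_eq_integral) (auto simp: has_bochner_integral_iff)
qed

lemma nn_integral_exp_neg_norm_square:
  "(\<integral>\<^sup>+x. ennreal (exp (- (norm (x :: real^'n::finite))\<^sup>2)) \<partial>lborel) = ennreal (sqrt pi ^ CARD('n))"
proof -
  have "(norm x)\<^sup>2 = (\<Sum>b\<in>Basis. (x \<bullet> b)\<^sup>2)" for x :: "real^'n"
    by (subst power2_norm_eq_inner, subst euclidean_inner) (simp add: power2_eq_square)
  then have "ennreal (exp (- (norm x)\<^sup>2)) = (\<Prod>b\<in>Basis. ennreal (exp (- (x \<bullet> b)\<^sup>2)))" for x :: "real^'n"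
    by (simp add: exp_sum[symmetric] sum_negf prod_ennreal)
  then have "(\<integral>\<^sup>+x. ennreal (exp (- (norm (x :: real^'n))\<^sup>2)) \<partial>lborel)
      = (\<integral>\<^sup>+x. (\<Prod>b\<in>Basis. ennreal (exp (- ((x :: real^'n) \<bullet> b)\<^sup>2))) \<partial>lborel)"
    by simp
  also have "\<dots> = (\<Prod>b\<in>(Basis :: (real^'n) set). \<integral>\<^sup>+t. ennreal (exp (- t\<^sup>2)) \<partial>lborel)"
    by (rule nn_integral_lborel_prod) auto
  finally show ?thesis
    by (simp add: nn_integral_exp_neg_square ennreal_power)
qed

lemma borel_measurable_matrix_vector_mult [measurable]:
  "((*v) (A :: real^'n::finite^'m::finite)) \<in> borel_measurable borel"
  by (intro borel_measurable_continuous_onI continuous_intros)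

lemma integral_exp_neg_quadratic_form:
  fixes P :: "real^'n::finite^'n" and c :: "real^'n"
  assumes "pos_def_sym P"
  shows "(\<integral>x. exp (- ((x - c) \<bullet> (P *v (x - c)))) \<partial>lborel) = sqrt pi ^ CARD('n) / sqrt (det P)"
proof -
  obtain F :: "real^'n^'n" where F: "transpose F ** P ** F = mat 1"
    using pos_def_sym_congruent_mat_1[OF assms] by blast
  then have "det F ^ 2 * det P = 1"
    by (metis det_I det_mul det_transpose mult.commute power2_eq_square mult.assoc)
  moreover from this have "det F \<noteq> 0"
    by auto
  ultimately have "det P = (1 / \<bar>det F\<bar>)\<^sup>2"
    by (simp add: field_simps)
  then have "\<bar>det F\<bar> = 1 / sqrt (det P)"
    by simp
  have quad: "(F *v y) \<bullet> (P *v (F *v y)) = (norm y)\<^sup>2" for y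
  proof -
    have "(F *v y) \<bullet> (P *v (F *v y)) = y \<bullet> (transpose F *v (P *v (F *v y)))"
      by (metis dot_lmul_matrix transpose_matrix_vector transpose_transpose)
    also have "\<dots> = y \<bullet> ((transpose F ** P ** F) *v y)"
      by (simp add: matrix_vector_mul_assoc matrix_mul_assoc)
    finally show ?thesis
      using F by (simp add: power2_norm_eq_inner)
  qed
  let ?f = "\<lambda>x. ennreal (exp (- (x \<bullet> (P *v x))))"
  have "(\<integral>\<^sup>+x. ?f (x - c) \<partial>lborel) = (\<integral>\<^sup>+x. ?f (x - c) \<partial>distr lborel borel ((+) c))"
    by (simp add: lborel_distr_plus)
  also have "\<dots> = (\<integral>\<^sup>+x. ?f x \<partial>lborel)"
    by (subst nn_integral_distr) auto
  also have "\<dots> = ennreal \<bar>det F\<bar> * (\<integral>\<^sup>+y. ?f (F *v y) \<partial>lborel)"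
    using nn_integral_linear_substitution[of "(*v) F" ?f] \<open>det F \<noteq> 0\<close>
    by simp
  also have "\<dots> = ennreal (sqrt pi ^ CARD('n) / sqrt (det P))"
    using pos_def_sym_det_pos[OF assms]
    by (simp add: quad nn_integral_exp_neg_norm_square \<open>\<bar>det F\<bar> = 1 / sqrt (det P)\<close> ennreal_mult'[symmetric])
  finally show ?thesis
    by (subst integral_eq_nn_integral) (auto simp: pos_def_sym_det_pos[OF assms])
qed

lemma complete_square:
  fixes A :: "real^'n::finite^'n" and b x :: "real^'n"
  assumes "transpose A = A" "invertible A"
  defines "m \<equiv> matrix_inv A *v b"
  shows "x \<bullet> (A *v x) - 2 * (b \<bullet> x) = (x - m) \<bullet> (A *v (x - m)) - b \<bullet> m"
proof -
  have Am: "A *v m = b"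
    by (simp add: m_def matrix_vector_mul_assoc matrix_inv_right[OF assms(2)])
  have "m \<bullet> (A *v x) = x \<bullet> b"
    using inner_matrix_symmetric[OF assms(1), of m x] Am by simp
  then show ?thesis
    using Am by (simp add: matrix_vector_mult_diff_distrib inner_diff_left inner_diff_right inner_commute)
qed

text \<open>Multiplying the kernel \<open>exp (- c * (norm (g - u *\<^sub>R w))\<^sup>2)\<close> by the density of
  \<open>N(0, \<Sigma>)\<close> gives a Gaussian in \<open>w\<close> whose quadratic form is \<open>A = (1/2) *\<^sub>R (matrix_inv \<Sigma> ** M)\<close>.\<close>

lemma
  fixes \<Sigma> :: "real^'n::finite^'n" and c u :: real
  assumes \<Sigma>: "pos_def_sym \<Sigma>" and c: "c > 0"
  defines "M \<equiv> mat 1 + (2 * c * u\<^sup>2) *\<^sub>R \<Sigma>"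
    and "A \<equiv> (c * u\<^sup>2) *\<^sub>R mat 1 + (1/2) *\<^sub>R matrix_inv \<Sigma>"
  shows combined_precision_pos_def: "pos_def_sym A"
    and combined_precision_inv: "matrix_inv A = 2 *\<^sub>R (matrix_inv M ** \<Sigma>)"
    and combined_precision_det: "det M = 2 ^ CARD('n) * det \<Sigma> * det A"
proof -
  define S where "S = matrix_inv \<Sigma>"
  have S\<Sigma>: "S ** \<Sigma> = mat 1" and \<Sigma>S: "\<Sigma> ** S = mat 1"
    using \<Sigma> by (simp_all add: S_def matrix_inv_left matrix_inv_right pos_def_sym_invertible)
  have "pos_def_sym M"
    unfolding M_def using \<Sigma> c by (intro pos_def_sym_mat_1_add) auto
  then have MN: "M ** matrix_inv M = mat 1"
    by (simp add: matrix_inv_right pos_def_sym_invertible)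
  have "pos_def_sym ((1/2) *\<^sub>R S)"
    unfolding S_def using \<Sigma> by (intro pos_def_sym_scaleR pos_def_sym_matrix_inv) auto
  then have "pos_def_sym ((1/2) *\<^sub>R S + (c * u\<^sup>2) *\<^sub>R mat 1)"
    using c by (intro pos_def_sym_add_nonneg) (auto simp: transpose_scalar scaleR_matrix_vector_assoc[symmetric])
  then show "pos_def_sym A"
    by (simp add: A_def S_def add.commute)
  have SM: "S ** M = 2 *\<^sub>R A"
    by (simp add: M_def A_def S_def[symmetric] matrix_add_ldistrib matrix_scalar_ac
        scalar_matrix_assoc[symmetric] S\<Sigma> algebra_simps)
  show "matrix_inv A = 2 *\<^sub>R (matrix_inv M ** \<Sigma>)"
  proof (rule matrix_inv_eqI)
    have "A ** (2 *\<^sub>R (matrix_inv M ** \<Sigma>)) = S ** (M ** matrix_inv M) ** \<Sigma>"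
      by (simp add: SM[symmetric] matrix_scalar_ac scalar_matrix_assoc matrix_mul_assoc)
    then show "A ** (2 *\<^sub>R (matrix_inv M ** \<Sigma>)) = mat 1"
      by (simp add: MN S\<Sigma>)
  qed
  have "2 *\<^sub>R (\<Sigma> ** A) = \<Sigma> ** (S ** M)"
    by (simp add: SM matrix_scalar_ac scalar_matrix_assoc)
  also have "\<dots> = M"
    by (simp add: matrix_mul_assoc \<Sigma>S)
  finally show "det M = 2 ^ CARD('n) * det \<Sigma> * det A"
    by (metis det_scaleR det_mul mult.assoc)
qed

lemma sqdist_add_gaussian_exponent:
  fixes \<Sigma> :: "real^'n::finite^'n" and g w :: "real^'n" and c u :: real
  assumes \<Sigma>: "pos_def_sym \<Sigma>" and c: "c > 0"
  defines "M \<equiv> mat 1 + (2 * c * u\<^sup>2) *\<^sub>R \<Sigma>"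
    and "A \<equiv> (c * u\<^sup>2) *\<^sub>R mat 1 + (1/2) *\<^sub>R matrix_inv \<Sigma>"
  defines "m \<equiv> matrix_inv A *v ((c * u) *\<^sub>R g)"
  shows "c * (norm (g - u *\<^sub>R w))\<^sup>2 + (w \<bullet> (matrix_inv \<Sigma> *v w)) / 2
       = (w - m) \<bullet> (A *v (w - m)) + c * (g \<bullet> (matrix_inv M *v g))"
proof -
  define N where "N = matrix_inv M"
  define b where "b = (c * u) *\<^sub>R g"
  have A: "pos_def_sym A"
    unfolding A_def using \<Sigma> c by (rule combined_precision_pos_def)
  have "N ** M = mat 1"
    using \<Sigma> c by (simp add: N_def M_def matrix_inv_left pos_def_sym_invertible pos_def_sym_mat_1_add)
  then have "g = N *v (M *v g)"
    by (simp add: matrix_vector_mul_assoc)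
  also have "M *v g = g + (2 * c * u\<^sup>2) *\<^sub>R (\<Sigma> *v g)"
    by (simp add: M_def matrix_vector_mult_add_rdistrib scaleR_matrix_vector_assoc[symmetric])
  finally have "g = N *v g + (2 * c * u\<^sup>2) *\<^sub>R (N *v (\<Sigma> *v g))"
    by (simp add: matrix_vector_right_distrib matrix_vector_mult_scaleR)
  then have "g \<bullet> g = g \<bullet> (N *v g) + (2 * c * u\<^sup>2) * (g \<bullet> (N *v (\<Sigma> *v g)))"
    by (metis inner_add_right inner_scaleR_right)
  moreover have "b \<bullet> m = 2 * (c * u)\<^sup>2 * (g \<bullet> (N *v (\<Sigma> *v g)))"
    using combined_precision_inv[OF \<Sigma> c, where u = u]
    by (simp add: m_def b_def N_def M_def A_def scaleR_matrix_vector_assoc[symmetric]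
        matrix_vector_mult_scaleR matrix_vector_mul_assoc[symmetric] power2_eq_square)
  ultimately have const: "c * (g \<bullet> g) - b \<bullet> m = c * (g \<bullet> (N *v g))"
    by (simp add: algebra_simps power2_eq_square)
  have norm_expand: "(norm (g - u *\<^sub>R w))\<^sup>2 = g \<bullet> g - 2 * u * (g \<bullet> w) + u\<^sup>2 * (w \<bullet> w)"
    by (simp only: power2_norm_eq_inner) (simp add: inner_commute algebra_simps power2_eq_square)
  have "c * (norm (g - u *\<^sub>R w))\<^sup>2 + (w \<bullet> (matrix_inv \<Sigma> *v w)) / 2
      = w \<bullet> (A *v w) - 2 * (b \<bullet> w) + c * (g \<bullet> g)"
    unfolding norm_expand
    by (simp add: A_def b_def scaleR_matrix_vector_assoc[symmetric] inner_commute algebra_simps power2_eq_square)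
  also have "\<dots> = (w - m) \<bullet> (A *v (w - m)) + c * (g \<bullet> (N *v g))"
    using complete_square[of A w b] A const
    by (simp add: m_def b_def pos_def_sym_def pos_def_sym_invertible)
  finally show ?thesis
    by (simp add: N_def)
qed

lemma mvn_expect_exp_neg_sqdist:
  fixes \<mu> a :: "real^'n::finite" and \<Sigma> :: "real^'n^'n" and c u :: real
  assumes \<Sigma>: "pos_def_sym \<Sigma>" and c: "c > 0"
  defines "M \<equiv> mat 1 + (2 * c * u\<^sup>2) *\<^sub>R \<Sigma>"
  shows "mvn_expect \<mu> \<Sigma> (\<lambda>v. exp (- c * (norm (a - u *\<^sub>R v))\<^sup>2))
       = det M powr (-1/2) * exp (- c * ((a - u *\<^sub>R \<mu>) \<bullet> (matrix_inv M *v (a - u *\<^sub>R \<mu>))))"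
proof -
  define A where "A = (c * u\<^sup>2) *\<^sub>R mat 1 + (1/2) *\<^sub>R matrix_inv \<Sigma>"
  define g where "g = a - u *\<^sub>R \<mu>"
  define m where "m = matrix_inv A *v ((c * u) *\<^sub>R g)"
  define Q where "Q = g \<bullet> (matrix_inv M *v g)"
  define Z where "Z = sqrt ((2 * pi) ^ CARD('n) * det \<Sigma>)"
  have A: "pos_def_sym A"
    unfolding A_def using \<Sigma> c by (rule combined_precision_pos_def)
  have "exp (- c * (norm (a - u *\<^sub>R v))\<^sup>2) * mvn_density \<mu> \<Sigma> v
      = exp (- c * Q) / Z * exp (- ((v - (\<mu> + m)) \<bullet> (A *v (v - (\<mu> + m)))))" for v
  proof -
    define w where "w = v - \<mu>"
    have "a - u *\<^sub>R v = g - u *\<^sub>R w"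
      by (simp add: g_def w_def algebra_simps)
    then have "c * (norm (a - u *\<^sub>R v))\<^sup>2 + (w \<bullet> (matrix_inv \<Sigma> *v w)) / 2
        = (w - m) \<bullet> (A *v (w - m)) + c * Q"
      using sqdist_add_gaussian_exponent[OF \<Sigma> c, where u = u and g = g and w = w]
      by (simp add: A_def M_def m_def Q_def)
    then have "exp (- c * (norm (a - u *\<^sub>R v))\<^sup>2) * mvn_density \<mu> \<Sigma> v
        = exp (- ((w - m) \<bullet> (A *v (w - m)) + c * Q)) / Z"
      unfolding mvn_density_def Z_def w_def[symmetric]
      by (simp add: mult_exp_exp)
    moreover have "w - m = v - (\<mu> + m)"
      by (simp add: w_def)
    ultimately show ?thesis
      by (simp add: mult_exp_exp algebra_simps)
  qed
  then have "mvn_expect \<mu> \<Sigma> (\<lambda>v. exp (- c * (norm (a - u *\<^sub>R v))\<^sup>2))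
      = exp (- c * Q) / Z * (sqrt pi ^ CARD('n) / sqrt (det A))"
    by (simp add: mvn_expect_def integral_exp_neg_quadratic_form[OF A])
  also have "Z * sqrt (det A) = sqrt pi ^ CARD('n) * sqrt (det M)"
    using combined_precision_det[OF \<Sigma> c, where u = u]
    by (simp add: Z_def A_def M_def real_sqrt_mult[symmetric] real_sqrt_power[symmetric] algebra_simps)
  then have "exp (- c * Q) / Z * (sqrt pi ^ CARD('n) / sqrt (det A)) = det M powr (-1/2) * exp (- c * Q)"
    using pos_def_sym_det_pos[OF A] pos_def_sym_det_pos[OF pos_def_sym_mat_1_add[OF \<Sigma>, of "2 * c * u\<^sup>2"]] c
    by (simp add: M_def powr_minus_divide powr_half_sqrt field_simps)
  finally show ?thesis
    by (simp add: Q_def g_def)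
qed

section \<open>Gamma mixtures of squared exponentials\<close>

lemma set_integral_eq_nn_integral:
  fixes f :: "'a \<Rightarrow> real"
  assumes [measurable]: "f \<in> borel_measurable M" "A \<in> sets M" and nonneg: "\<And>x. x \<in> A \<Longrightarrow> 0 \<le> f x"
  shows "(LINT x:A|M. f x) = enn2real (\<integral>\<^sup>+x. ennreal (f x) * indicator A x \<partial>M)"
proof -
  have "(LINT x:A|M. f x) = (\<integral>x. indicator A x * f x \<partial>M)"
    by (simp add: set_lebesgue_integral_def)
  also have "\<dots> = enn2real (\<integral>\<^sup>+x. ennreal (indicator A x * f x) \<partial>M)"
    using nonneg by (intro integral_eq_nn_integral) (auto split: split_indicator)
  also have "(\<integral>\<^sup>+x. ennreal (indicator A x * f x) \<partial>M) = (\<integral>\<^sup>+x. ennreal (f x) * indicator A x \<partial>M)"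
    by (intro nn_integral_cong) (auto split: split_indicator)
  finally show ?thesis .
qed

lemma UN_exp_intervals:
  fixes c :: real
  assumes c: "c > 0"
  shows "(\<Union>n::nat. {c * exp (- real n) .. c * exp (real n)}) = {0<..}"
proof (intro equalityI subsetI)
  fix s :: real
  assume "s \<in> {0<..}"
  obtain n :: nat where "\<bar>ln (s / c)\<bar> \<le> real n"
    using real_arch_simple by blast
  then have "exp (- real n) \<le> exp (ln (s / c))" "exp (ln (s / c)) \<le> exp (real n)"
    by (simp_all add: abs_le_iff)
  with \<open>s \<in> {0<..}\<close> have "exp (- real n) \<le> s / c" "s / c \<le> exp (real n)"
    using c by simp_all
  then show "s \<in> (\<Union>n. {c * exp (- real n) .. c * exp (real n)})"
    using c by (auto simp: field_simps)
qed (use c in \<open>auto intro: less_le_trans[of 0 "c * exp _"]\<close>)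

lemma nn_integral_exp_substitution:
  fixes F :: "real \<Rightarrow> real" and c :: real
  assumes c: "c > 0" and [measurable]: "F \<in> borel_measurable borel"
  shows "(\<integral>\<^sup>+s. ennreal (F s) * indicator {0<..} s \<partial>lborel)
       = (\<integral>\<^sup>+t. ennreal (F (c * exp t) * (c * exp t)) \<partial>lborel)"
proof -
  define D1 where "D1 = density lborel (\<lambda>s. ennreal (F s))"
  define D2 where "D2 = density lborel (\<lambda>t. ennreal (F (c * exp t) * (c * exp t)))"
  define A where "A n = {c * exp (- real n) .. c * exp (real n)}" for n :: nat
  define B where "B n = {- real n .. real n}" for n :: nat
  have AB: "emeasure D1 (A n) = emeasure D2 (B n)" for n
  proof -
    have "emeasure D1 (A n) = (\<integral>\<^sup>+s. ennreal (F s * indicator (A n) s) \<partial>lborel)"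
      unfolding D1_def by (subst emeasure_density) (auto simp: A_def intro!: nn_integral_cong split: split_indicator)
    also have "\<dots> = (\<integral>\<^sup>+t. ennreal (F (c * exp t) * (c * exp t) * indicator (B n) t) \<partial>lborel)"
      unfolding A_def B_def using c
      by (intro nn_integral_substitution[where g = "\<lambda>t. c * exp t" and g' = "\<lambda>t. c * exp t", simplified])
        (auto intro!: derivative_eq_intros continuous_on_mult_left continuous_on_exp continuous_on_id
          simp: set_borel_measurable_def)
    also have "\<dots> = emeasure D2 (B n)"
      unfolding D2_def by (subst emeasure_density) (auto simp: B_def intro!: nn_integral_cong split: split_indicator)
    finally show ?thesis .
  qed
  have "incseq A"
    unfolding A_def by (intro monoI) (auto simp: c)
  have "incseq B"
    unfolding B_def by (intro monoI) auto
  have UA: "(\<Union>n. A n) = {0<..}"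
    unfolding A_def using c by (rule UN_exp_intervals)
  have UB: "(\<Union>n. B n) = UNIV"
  proof (intro equalityI subsetI)
    fix t :: real
    obtain n :: nat where "\<bar>t\<bar> \<le> real n"
      using real_arch_simple by blast
    then have "t \<in> B n"
      by (auto simp: B_def abs_le_iff)
    then show "t \<in> (\<Union>n. B n)"
      by blast
  qed simp
  have "emeasure D1 {0<..} = (SUP n. emeasure D1 (A n))"
    unfolding UA[symmetric]
    by (rule SUP_emeasure_incseq[symmetric, OF _ \<open>incseq A\<close>]) (auto simp: D1_def A_def)
  also have "\<dots> = emeasure D2 UNIV"
    unfolding AB UB[symmetric]
    by (rule SUP_emeasure_incseq[OF _ \<open>incseq B\<close>]) (auto simp: D2_def B_def)
  finally have "emeasure D1 {0<..} = emeasure D2 UNIV" .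
  then show ?thesis
    unfolding D1_def D2_def by (simp add: emeasure_density)
qed

lemma nn_integral_lborel_fold:
  fixes G :: "real \<Rightarrow> ennreal"
  assumes [measurable]: "G \<in> borel_measurable borel"
  shows "(\<integral>\<^sup>+t. G t \<partial>lborel) = (\<integral>\<^sup>+t. (G t + G (- t)) * indicator {0..} t \<partial>lborel)"
proof -
  have "(\<integral>\<^sup>+t. G t \<partial>lborel) = (\<integral>\<^sup>+t. G t * indicator {0..} t + G t * indicator {..<0} t \<partial>lborel)"
    by (intro nn_integral_cong) (auto split: split_indicator)
  also have "\<dots> = (\<integral>\<^sup>+t. G t * indicator {0..} t \<partial>lborel) + (\<integral>\<^sup>+t. G t * indicator {..<0} t \<partial>lborel)"
    by (rule nn_integral_add) auto
  also have "(\<integral>\<^sup>+t. G t * indicator {..<0} t \<partial>lborel) = (\<integral>\<^sup>+t. G t * indicator {..<0} t \<partial>distr lborel borel uminus)"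
    by (simp add: lborel_distr_uminus)
  also have "\<dots> = (\<integral>\<^sup>+t. G (- t) * indicator {0<..} t \<partial>lborel)"
    by (subst nn_integral_distr) (auto intro!: nn_integral_cong split: split_indicator)
  also have "\<dots> = (\<integral>\<^sup>+t. G (- t) * indicator {0..} t \<partial>lborel)"
    using AE_lborel_singleton[of 0]
    by (intro nn_integral_cong_AE) (auto elim!: eventually_mono split: split_indicator)
  also have "(\<integral>\<^sup>+t. G t * indicator {0..} t \<partial>lborel) + \<dots> = (\<integral>\<^sup>+t. (G t + G (- t)) * indicator {0..} t \<partial>lborel)"
    by (subst nn_integral_add[symmetric]) (auto simp: distrib_right)
  finally show ?thesis .
qed

lemma nn_integral_gamma_density:
  fixes \<nu> b :: real
  assumes \<nu>: "\<nu> > 0" and b: "b > 0"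
  shows "(\<integral>\<^sup>+x. ennreal (gamma_density \<nu> b x) * indicator {0<..} x \<partial>lborel) = 1"
proof -
  define I where "I = (\<integral>\<^sup>+x. ennreal (x powr (\<nu> - 1) * exp (- b * x)) * indicator {0..} x \<partial>lborel)"
  have "ennreal (Gamma \<nu>) = (\<integral>\<^sup>+t. ennreal (t powr (\<nu> - 1) / exp t) * indicator {0..} t \<partial>lborel)"
    by (rule nn_integral_has_integral_lebesgue'[OF _ Gamma_integral_real[OF \<nu>], symmetric]) simp
  also have "\<dots> = ennreal b * (\<integral>\<^sup>+x. ennreal ((b * x) powr (\<nu> - 1) / exp (b * x)) * indicator {0..} (b * x) \<partial>lborel)"
    using b by (subst nn_integral_real_affine[where c = b and t = 0]) auto
  also have "(\<integral>\<^sup>+x. ennreal ((b * x) powr (\<nu> - 1) / exp (b * x)) * indicator {0..} (b * x) \<partial>lborel)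
      = (\<integral>\<^sup>+x. ennreal (b powr (\<nu> - 1)) * (ennreal (x powr (\<nu> - 1) * exp (- b * x)) * indicator {0..} x) \<partial>lborel)"
    using b by (intro nn_integral_cong)
      (auto split: split_indicator simp: powr_mult ennreal_mult[symmetric] exp_minus field_simps zero_le_mult_iff)
  also have "\<dots> = ennreal (b powr (\<nu> - 1)) * I"
    unfolding I_def by (rule nn_integral_cmult) measurable
  finally have "ennreal (Gamma \<nu>) = ennreal (b powr \<nu>) * I"
    using b by (simp add: ennreal_mult[symmetric] mult.assoc[symmetric] powr_diff field_simps)
  have "(\<integral>\<^sup>+x. ennreal (gamma_density \<nu> b x) * indicator {0<..} x \<partial>lborel)
      = (\<integral>\<^sup>+x. ennreal (b powr \<nu> / Gamma \<nu>) * (ennreal (x powr (\<nu> - 1) * exp (- b * x)) * indicator {0..} x) \<partial>lborel)"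
    using b Gamma_real_pos[OF \<nu>] by (intro nn_integral_cong)
      (auto split: split_indicator simp: gamma_density_def ennreal_mult[symmetric] mult.assoc)
  also have "\<dots> = ennreal (b powr \<nu> / Gamma \<nu>) * I"
    unfolding I_def by (rule nn_integral_cmult) measurable
  also have "\<dots> = ennreal (1 / Gamma \<nu>) * ennreal (Gamma \<nu>)"
    using b Gamma_real_pos[OF \<nu>] \<open>ennreal (Gamma \<nu>) = ennreal (b powr \<nu>) * I\<close>
    by (simp add: ennreal_mult[symmetric] mult.assoc[symmetric])
  finally show ?thesis
    using Gamma_real_pos[OF \<nu>] by (simp add: ennreal_mult[symmetric])
qed

lemma borel_measurable_cosh [measurable]: "(cosh :: real \<Rightarrow> real) \<in> borel_measurable borel"
  by (intro borel_measurable_continuous_onI continuous_intros)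

lemma besselK_eq_nn_integral:
  "besselK \<nu> z = enn2real (\<integral>\<^sup>+t. ennreal (exp (\<nu> * t) * exp (- z * cosh t)) \<partial>lborel) / 2"
proof -
  define G where "G t = exp (\<nu> * t) * exp (- z * cosh t)" for t
  have [measurable]: "G \<in> borel_measurable borel"
    unfolding G_def by measurable
  have "(\<integral>\<^sup>+t. ennreal (G t) \<partial>lborel)
      = (\<integral>\<^sup>+t. (ennreal (G t) + ennreal (G (- t))) * indicator {0..} t \<partial>lborel)"
    by (rule nn_integral_lborel_fold) measurable
  also have "\<dots> = (\<integral>\<^sup>+t. 2 * (ennreal (exp (- z * cosh t) * cosh (\<nu> * t)) * indicator {0..} t) \<partial>lborel)"
  proof (intro nn_integral_cong)
    fix t :: real
    have "ennreal (G t) + ennreal (G (- t)) = ennreal (G t + G (- t))"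
      by (simp add: G_def)
    also have "G t + G (- t) = 2 * (exp (- z * cosh t) * cosh (\<nu> * t))"
      by (simp add: G_def cosh_def exp_minus field_simps)
    finally show "(ennreal (G t) + ennreal (G (- t))) * indicator {0..} t
        = 2 * (ennreal (exp (- z * cosh t) * cosh (\<nu> * t)) * indicator {0..} t)"
      by (simp add: ennreal_mult mult.assoc)
  qed
  also have "\<dots> = 2 * (\<integral>\<^sup>+t. ennreal (exp (- z * cosh t) * cosh (\<nu> * t)) * indicator {0..} t \<partial>lborel)"
    by (rule nn_integral_cmult) measurable
  finally show ?thesis
    unfolding besselK_def G_def
    by (subst set_integral_eq_nn_integral) (auto simp: enn2real_mult)
qed

lemma gamma_mixture_integrand_exp_substitution:
  fixes \<nu> \<phi> r t :: real
  assumes \<phi>: "\<phi> > 0" and r: "r > 0"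
  defines "s \<equiv> 2 * \<phi> * r * exp t"
  shows "exp (- r\<^sup>2 / s) * gamma_density \<nu> (1 / (4 * \<phi>\<^sup>2)) s * s
       = (r / (2 * \<phi>)) powr \<nu> / Gamma \<nu> * (exp (\<nu> * t) * exp (- (r / \<phi>) * cosh t))"
proof -
  define b where "b = 1 / (4 * \<phi>\<^sup>2)"
  have "b > 0" "s > 0"
    using \<phi> r by (auto simp: b_def s_def)
  \<comment> \<open>This choice of \<open>s\<close> balances the two terms of the exponent \<open>r\<^sup>2 / s + b * s\<close>.\<close>
  have "- r\<^sup>2 / s + - b * s = - (r / \<phi>) * cosh t"
    using \<phi> r by (simp add: b_def s_def cosh_def exp_minus power2_eq_square field_simps)
  then have "exp (- r\<^sup>2 / s) * exp (- b * s) = exp (- (r / \<phi>) * cosh t)"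
    by (simp only: mult_exp_exp)
  then have "exp (- r\<^sup>2 / s) * gamma_density \<nu> b s * s
      = b powr \<nu> / Gamma \<nu> * (s powr (\<nu> - 1) * s) * exp (- (r / \<phi>) * cosh t)"
    by (simp add: gamma_density_def ac_simps)
  also have "s powr (\<nu> - 1) * s = (2 * \<phi> * r) powr \<nu> * exp (\<nu> * t)"
    using \<open>s > 0\<close> \<phi> r by (simp add: s_def powr_diff powr_mult powr_def[of "exp t"] field_simps)
  also have "b powr \<nu> / Gamma \<nu> * ((2 * \<phi> * r) powr \<nu> * exp (\<nu> * t))
      = (r / (2 * \<phi>)) powr \<nu> / Gamma \<nu> * exp (\<nu> * t)"
    using \<phi> r \<open>b > 0\<close> by (simp add: powr_mult[symmetric] b_def power2_eq_square field_simps)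
  finally show ?thesis
    by (simp add: b_def)
qed

lemma gamma_mixture_exp_eq_besselK:
  fixes \<nu> \<phi> r :: real
  assumes \<nu>: "\<nu> > 0" and \<phi>: "\<phi> > 0" and r: "r > 0"
  shows "(LBINT s:{0<..}. exp (- r\<^sup>2 / s) * gamma_density \<nu> (1 / (4 * \<phi>\<^sup>2)) s)
       = 2 powr (1 - \<nu>) / Gamma \<nu> * (r / \<phi>) powr \<nu> * besselK \<nu> (r / \<phi>)"
proof -
  define z where "z = r / \<phi>"
  define F where "F s = exp (- r\<^sup>2 / s) * gamma_density \<nu> (1 / (4 * \<phi>\<^sup>2)) s" for s
  define K0 where "K0 = (z / 2) powr \<nu> / Gamma \<nu>"
  have "z > 0" "2 * \<phi> * r > 0" "Gamma \<nu> > 0"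
    using \<nu> \<phi> r by (auto simp: z_def)
  then have "K0 \<ge> 0"
    by (simp add: K0_def)
  have [measurable]: "F \<in> borel_measurable borel"
    unfolding F_def gamma_density_def by measurable
  have "(LBINT s:{0<..}. F s) = enn2real (\<integral>\<^sup>+s. ennreal (F s) * indicator {0<..} s \<partial>lborel)"
    using \<phi> \<open>Gamma \<nu> > 0\<close> by (intro set_integral_eq_nn_integral) (auto simp: F_def gamma_density_def)
  also have "(\<integral>\<^sup>+s. ennreal (F s) * indicator {0<..} s \<partial>lborel)
      = (\<integral>\<^sup>+t. ennreal (F (2 * \<phi> * r * exp t) * (2 * \<phi> * r * exp t)) \<partial>lborel)"
    using \<open>2 * \<phi> * r > 0\<close> by (rule nn_integral_exp_substitution) measurable
  also have "\<dots> = (\<integral>\<^sup>+t. ennreal K0 * ennreal (exp (\<nu> * t) * exp (- z * cosh t)) \<partial>lborel)"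
    unfolding F_def gamma_mixture_integrand_exp_substitution[OF \<phi> r]
    using \<open>K0 \<ge> 0\<close> by (simp add: K0_def z_def ennreal_mult'[symmetric] mult.commute)
  also have "\<dots> = ennreal K0 * (\<integral>\<^sup>+t. ennreal (exp (\<nu> * t) * exp (- z * cosh t)) \<partial>lborel)"
    by (rule nn_integral_cmult) measurable
  also have "enn2real \<dots> = K0 * enn2real (\<integral>\<^sup>+t. ennreal (exp (\<nu> * t) * exp (- z * cosh t)) \<partial>lborel)"
    using \<open>K0 \<ge> 0\<close> by (simp add: enn2real_mult)
  also have "\<dots> = K0 * 2 * besselK \<nu> z"
    by (simp add: besselK_eq_nn_integral)
  also have "K0 * 2 = 2 powr (1 - \<nu>) / Gamma \<nu> * z powr \<nu>"
    using \<open>z > 0\<close> by (simp add: K0_def powr_divide powr_diff)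
  finally show ?thesis
    by (simp add: F_def z_def)
qed

lemma gamma_mixture_exp_eq_matern:
  fixes \<nu> \<phi> r :: real
  assumes \<nu>: "\<nu> > 0" and \<phi>: "\<phi> > 0" and r: "r \<ge> 0"
  shows "(LBINT s:{0<..}. exp (- r\<^sup>2 / s) * gamma_density \<nu> (1 / (4 * \<phi>\<^sup>2)) s) = matern r \<nu> \<phi>"
proof (cases "r = 0")
  case True
  have "(LBINT s:{0<..}. gamma_density \<nu> (1 / (4 * \<phi>\<^sup>2)) s)
      = enn2real (\<integral>\<^sup>+s. ennreal (gamma_density \<nu> (1 / (4 * \<phi>\<^sup>2)) s) * indicator {0<..} s \<partial>lborel)"
    using Gamma_real_pos[OF \<nu>] by (intro set_integral_eq_nn_integral) (auto simp: gamma_density_def)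
  also have "\<dots> = 1"
    using \<nu> \<phi> by (simp add: nn_integral_gamma_density)
  finally show ?thesis
    using True by (simp add: matern_def)
next
  case False
  then show ?thesis
    using r gamma_mixture_exp_eq_besselK[OF \<nu> \<phi>] by (simp add: matern_def)
qed

theorem proposition1:
  fixes \<sigma>2 \<nu> \<phi> u :: real and lam h :: "real^'d" and \<Lambda> :: "real^'d^'d"
  assumes "\<sigma>2 > 0" and "\<nu> > 0" and "\<phi> > 0" and "pos_def_sym \<Lambda>"
  defines "Cs \<equiv> (\<lambda>(x::real^'d) (\<rho>::real). \<sigma>2 * exp (- (norm x)\<^sup>2 / \<rho>\<^sup>2))"
  defines "C \<equiv> (\<lambda>(h::real^'d) (u::real) (\<rho>::real).
                 mvn_expect lam ((\<rho>\<^sup>2 / 2) *\<^sub>R \<Lambda>) (\<lambda>v. Cs (h - u *\<^sub>R v) \<rho>))"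
  defines "K \<equiv> (\<lambda>(h::real^'d) (u::real).
                 LBINT s:{0<..}. C h u (sqrt s) * gamma_density \<nu> (1 / (4 * \<phi>\<^sup>2)) s)"
  defines "hu \<equiv> sqrt ((h - u *\<^sub>R lam) \<bullet> (matrix_inv (u\<^sup>2 *\<^sub>R \<Lambda> + mat 1) *v (h - u *\<^sub>R lam)))"
  shows "K h u = \<sigma>2 * det (mat 1 + u\<^sup>2 *\<^sub>R \<Lambda>) powr (-1/2) * matern hu \<nu> \<phi>"
proof -
  define M where "M = mat 1 + u\<^sup>2 *\<^sub>R \<Lambda>"
  have "pos_def_sym (matrix_inv M)"
    unfolding M_def using assms(4) by (intro pos_def_sym_matrix_inv pos_def_sym_mat_1_add) auto
  then have hu: "hu \<ge> 0" "hu\<^sup>2 = (h - u *\<^sub>R lam) \<bullet> (matrix_inv M *v (h - u *\<^sub>R lam))"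
    using pos_def_sym_imp_nonneg by (auto simp: hu_def M_def add.commute)
  have "C h u (sqrt s) = \<sigma>2 * det M powr (-1/2) * exp (- hu\<^sup>2 / s)" if "s > 0" for s
  proof -
    have "(2 * (1 / s) * u\<^sup>2) *\<^sub>R ((s / 2) *\<^sub>R \<Lambda>) = u\<^sup>2 *\<^sub>R \<Lambda>"
      using that by simp
    then show ?thesis
      using mvn_expect_exp_neg_sqdist[OF pos_def_sym_scaleR[OF assms(4)], of "s / 2" "1 / s" lam h u] that
      by (simp add: C_def Cs_def mvn_expect_def M_def hu(2) mult.assoc)
  qed
  then have "K h u = (LBINT s:{0<..}. \<sigma>2 * det M powr (-1/2) * (exp (- hu\<^sup>2 / s) * gamma_density \<nu> (1 / (4 * \<phi>\<^sup>2)) s))"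
    unfolding K_def by (intro set_lebesgue_integral_cong) auto
  also have "\<dots> = \<sigma>2 * det M powr (-1/2) * matern hu \<nu> \<phi>"
    using gamma_mixture_exp_eq_matern[OF assms(2,3) hu(1)] by simp
  finally show ?thesis
    by (simp add: M_def)
qed

end
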